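(* Let $s,d\geq1$ be integers and $n=v_2(2d)$. The maximum of $v_2(S(s,Z))$, as $Z$ ranges over number fields of degree $2d$, is attained by an extension of degree $\frac{2d}{2^n}$ of $\mathbf{Q}(\mu_{2^{n+1}})$ with $Z^{(2)}=\mathbf{Q}(\mu_{2^{n+1}})$. Moreover this maximum is attained only if $Z^{(2)}=\mathbf{Q}(\mu_{2^{n+1}})$.
   Context: For a number field $F$ and a prime $p$: $\mu_{p^m}$ is the group of $p^m$-th roots of unity, $\mathbf{Q}(\mu_{p^\infty})=\bigcup_m\mathbf{Q}(\mu_{p^m})$, $F^{(p)}=F\cap\mathbf{Q}(\mu_{p^\infty})$, $m(F,p)=\inf\{m\geq1\mid F^{(p)}\subset\mathbf{Q}(\mu_{p^m}),\ p^m\neq2\}$ and $t(F,p)=[\mathbf{Q}(\mu_{p^{m(F,p)}}):F^{(p)}]$. For an integer $N$, $N_p=p^{v_p(N)}$. The Schur bound is $$S(s,F)=2^{s-\lfloor s/t(F,2)\rfloor}\prod_{p\ \mathrm{prime}}p^{m(F,p)\lfloor s/t(F,p)\rfloor}\Big(\big\lfloor \tfrac{s}{t(F,p)}\big\rfloor!\Big)_p.$$ *)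

theory Defs
  imports "HOL-Algebra.Algebra" "HOL-Computational_Algebra.Primes" "HOL-Library.Discrete_Functions"
begin

definition CC :: "complex ring" where
  "CC = \<lparr>carrier = UNIV, monoid.mult = (*), one = 1, ring.zero = 0, ring.add = (+)\<rparr>"

definition number_field :: "complex set \<Rightarrow> bool" where
  "number_field F \<longleftrightarrow> subfield F CC \<and> (\<exists>n. ring.dimension CC n \<rat> F)"

definition has_degree :: "complex set \<Rightarrow> nat \<Rightarrow> bool" where
  "has_degree F n \<longleftrightarrow> ring.dimension CC n \<rat> F"

definition rel_degree :: "complex set \<Rightarrow> complex set \<Rightarrow> nat" where
  "rel_degree E K = (THE n. ring.dimension CC n K E)"

definition mu :: "nat \<Rightarrow> complex set" where
  "mu n = {z. z ^ n = 1}"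

definition cyc :: "nat \<Rightarrow> complex set" where
  "cyc n = generate_field CC (mu n)"

definition cyc_inf :: "nat \<Rightarrow> complex set" where
  "cyc_inf p = (\<Union>m. cyc (p ^ m))"

definition Fp :: "complex set \<Rightarrow> nat \<Rightarrow> complex set" where
  "Fp F p = F \<inter> cyc_inf p"

definition m_idx :: "complex set \<Rightarrow> nat \<Rightarrow> nat" where
  "m_idx F p = Inf {m. m \<ge> 1 \<and> Fp F p \<subseteq> cyc (p ^ m) \<and> p ^ m \<noteq> 2}"

definition t_idx :: "complex set \<Rightarrow> nat \<Rightarrow> nat" where
  "t_idx F p = rel_degree (cyc (p ^ m_idx F p)) (Fp F p)"

definition ppart :: "nat \<Rightarrow> nat \<Rightarrow> nat" where
  "ppart N p = p ^ multiplicity p N"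

definition schur_factor :: "nat \<Rightarrow> complex set \<Rightarrow> nat \<Rightarrow> nat" where
  "schur_factor s F p =
     p ^ (m_idx F p * (s div t_idx F p)) * ppart (fact (s div t_idx F p)) p"

text \<open>The product over all primes; only finitely many factors differ from 1 for a
  number field, so we take the product over those primes.\<close>
definition schur_bound :: "nat \<Rightarrow> complex set \<Rightarrow> nat" where
  "schur_bound s F =
     2 ^ (s - s div t_idx F 2) *
     (\<Prod>p \<in> {p. Factorial_Ring.prime p \<and> schur_factor s F p \<noteq> 1}. schur_factor s F p)"

end

theory Submission
  imports Defs "Berlekamp_Zassenhaus.Factor_Bound"
begin

(* For a number field Z of degree N, the field Z^(2) has degree 2^e over Q with 2^e dividing N,
   and the invariants are m(Z,2) = e + j + 1 and t(Z,2) = 2^j, where 2^j = [Q(mu_(2^m)) : Z^(2)].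
   Only the prime 2 contributes to v_2(S(s,Z)), which is s + (e + j) q + v_2(q!) with
   q = floor(s / 2^j). Since v_2((2^j q)!) >= j q + v_2(q!), this is at most (n + 1) s + v_2(s!)
   for n = v_2(N), with equality exactly when j = 0 and e = n, i.e. when Z^(2) = Q(mu_(2^(n+1))).
   The maximum is attained by adjoining a real d-th root of 2, d the odd part of N, to
   Q(mu_(2^(n+1))): the degrees 2^n and d are coprime, so the extension has degree d, and a degree
   count shows that Q(mu_(2^(n+1))) is the whole of Z^(2). The product defining S(s,Z) is finite
   because [Q(mu_p) : Q] = p - 1 exceeds N s for large primes p. *)

section \<open>Degrees of field extensions\<close>

context ring
begin

lemma subfield_imp_subalgebra:
  assumes "subfield F R" "K \<subseteq> F"
  shows "subalgebra K F R"
proof (rule subalgebra.intro)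
  show "subgroup F (add_monoid R)"
    using subring.axioms(1)[OF subfieldE(1)[OF assms(1)]] .
  show "subalgebra_axioms K F R"
    using assms subringE[OF subfieldE(1)[OF assms(1)]] by unfold_locales auto
qed

lemma Span_mono_field:
  assumes "subfield K R" "subfield F R" "K \<subseteq> F" "set Us \<subseteq> carrier R"
  shows "Span K Us \<subseteq> Span F Us"
  unfolding Span_eq_combine_set[OF assms(1,4)] Span_eq_combine_set[OF assms(2,4)]
  using assms(3) by blast

lemma dimension_tower:
  assumes K: "subfield K R" and F: "subfield F R" and E: "subfield E R"
    and KF: "K \<subseteq> F" and FE: "F \<subseteq> E" and n: "dimension n K E"
  obtains a b where "dimension a K F" "dimension b F E" "n = a * b"
proof -
  have "finite_dimension K F"
    using subalbegra_incl_imp_finite_dimension[OF K finite_dimensionI[OF n]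
        subfield_imp_subalgebra[OF F KF] FE] .
  then obtain a where a: "dimension a K F"
    by blast
  obtain Vs where Vs: "set Vs \<subseteq> carrier R" "independent K Vs" "Span K Vs = E"
    using exists_base[OF K n] by blast
  have "Span F Vs \<subseteq> E"
    using subalgebra_Span_incl[OF F subfield_imp_subalgebra[OF E FE]]
      Span_base_incl[OF K Vs(1)] Vs(3) by auto
  moreover have "E \<subseteq> Span F Vs"
    using Span_mono_field[OF K F KF Vs(1)] Vs(3) by simp
  ultimately have "finite_dimension F E"
    using Span_finite_dimension[OF F Vs(1)] by simp
  then obtain b where b: "dimension b F E"
    by blast
  have "n = a * b"
    using dimension_is_inj[OF K n telescopic_base[OF K F a b]] .
  with a b show ?thesis
    by (rule that)
qed

lemma dimension_mono:
  assumes K: "subfield K R" and "dimension a K E'" "dimension b K E" "E' \<subseteq> E"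
  shows "a \<le> b"
proof -
  obtain Vs where Vs: "set Vs \<subseteq> carrier R" "independent K Vs" "length Vs = a" "Span K Vs = E'"
    using exists_base[OF K assms(2)] by blast
  have "set Vs \<subseteq> E"
    using Span_base_incl[OF K Vs(1)] Vs(4) assms(4) by auto
  from independent_length_le_dimension[OF K assms(3) Vs(2) this] Vs(3) show ?thesis
    by simp
qed

lemma dimension_subset_eq:
  assumes K: "subfield K R" and "dimension n K E'" "dimension n K E" "E' \<subseteq> E"
  shows "E' = E"
proof -
  obtain Vs where Vs: "set Vs \<subseteq> carrier R" "independent K Vs" "length Vs = n" "Span K Vs = E'"
    using exists_base[OF K assms(2)] by blast
  have "set Vs \<subseteq> E"
    using Span_base_incl[OF K Vs(1)] Vs(4) assms(4) by auto
  from independent_length_eq_dimension[OF K assms(3) Vs(2) this] Vs(3,4) show ?thesis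
    by simp
qed

lemma dimension_one_eq:
  assumes "subfield F R" "F \<subseteq> E" "dimension 1 F E"
  shows "F = E"
  using dimension_subset_eq[OF assms(1) dimension_one[OF assms(1)] assms(3,2)] .

end

section \<open>The complex numbers as a HOL-Algebra field\<close>

lemma CC_simps [simp]:
  "carrier CC = UNIV" "monoid.mult CC = (*)" "one CC = 1" "ring.zero CC = 0" "ring.add CC = (+)"
  by (simp_all add: CC_def)

lemma field_CC: "field CC"
proof -
  have "\<exists>y. x + y = 0" for x :: complex
    using add.right_inverse by blast
  moreover have "x \<noteq> 0 \<Longrightarrow> \<exists>y. x * y = 1" for x :: complex
    by (rule exI[of _ "inverse x"]) auto
  ultimately show ?thesis
    unfolding CC_def by unfold_locales (auto simp: algebra_simps Units_def)
qed

(* A global interpretation of the field locale clashes with duplicate facts of the library;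
   the few lemmas that need field rather than domain are used through field_CC. *)
interpretation CC: domain CC
  by (rule field.axioms(1)[OF field_CC])

lemma CC_a_inv [simp]: "a_inv CC x = - x"
  using CC.add.inv_equality[of "-x" x] by simp

lemma CC_inv [simp]: "x \<noteq> 0 \<Longrightarrow> inv\<^bsub>CC\<^esub> x = inverse x"
  using CC.comm_inv_char[of x "inverse x"] by simp

lemma CC_pow [simp]: "x [^]\<^bsub>CC\<^esub> (n::nat) = x ^ n"
  by (induct n) (simp_all add: mult.commute)

lemma subfield_CC_iff:
  "subfield K CC \<longleftrightarrow> 1 \<in> K \<and> (\<forall>x\<in>K. -x \<in> K) \<and> (\<forall>x\<in>K. \<forall>y\<in>K. x * y \<in> K) \<and>
     (\<forall>x\<in>K. \<forall>y\<in>K. x + y \<in> K) \<and> (\<forall>x\<in>K. x \<noteq> 0 \<longrightarrow> inverse x \<in> K)"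
    (is "_ \<longleftrightarrow> ?closed")
proof
  assume K: "subfield K CC"
  show ?closed
    using subringE[OF subfieldE(1)[OF K]] CC.subfield_m_inv(1)[OF K] by auto
next
  assume closed: ?closed
  show "subfield K CC"
  proof (rule field.subfieldI'[OF field_CC CC.subringI])
    fix k
    assume "k \<in> K - {\<zero>\<^bsub>CC\<^esub>}"
    then show "inv\<^bsub>CC\<^esub> k \<in> K"
      using closed by simp
  qed (use closed in simp_all)
qed

lemma subfield_CC_closed:
  assumes "subfield K CC"
  shows "1 \<in> K" "0 \<in> K" "x \<in> K \<Longrightarrow> -x \<in> K" "x \<in> K \<Longrightarrow> y \<in> K \<Longrightarrow> x * y \<in> K"
    "x \<in> K \<Longrightarrow> y \<in> K \<Longrightarrow> x + y \<in> K" "x \<in> K \<Longrightarrow> y \<in> K \<Longrightarrow> x - y \<in> K"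
    "x \<in> K \<Longrightarrow> inverse x \<in> K" "x \<in> K \<Longrightarrow> y \<in> K \<Longrightarrow> x / y \<in> K"
    "x \<in> K \<Longrightarrow> x ^ n \<in> K"
proof -
  note closed = assms[unfolded subfield_CC_iff]
  show one: "1 \<in> K"
    using closed by simp
  have "1 + - 1 \<in> K"
    using closed by blast
  then show zero: "0 \<in> K"
    by simp
  show "x \<in> K \<Longrightarrow> -x \<in> K" "x \<in> K \<Longrightarrow> y \<in> K \<Longrightarrow> x * y \<in> K"
    "x \<in> K \<Longrightarrow> y \<in> K \<Longrightarrow> x + y \<in> K"
    using closed by auto
  show "x \<in> K \<Longrightarrow> y \<in> K \<Longrightarrow> x - y \<in> K"
    using closed by (metis diff_conv_add_uminus)
  have inverse: "inverse z \<in> K" if "z \<in> K" for z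
    using closed zero that by (cases "z = 0") auto
  then show "x \<in> K \<Longrightarrow> inverse x \<in> K" .
  show "x \<in> K \<Longrightarrow> y \<in> K \<Longrightarrow> x / y \<in> K"
    using closed inverse[of y] by (simp add: divide_inverse)
  show "x \<in> K \<Longrightarrow> x ^ n \<in> K"
    using closed one by (induct n) auto
qed

lemma subfield_CC_Rats: "subfield \<rat> CC"
  unfolding subfield_CC_iff by (auto simp: Rats_inverse)

lemma Rats_subset_subfield_CC:
  assumes K: "subfield K CC"
  shows "\<rat> \<subseteq> K"
proof
  fix q :: complex
  assume "q \<in> \<rat>"
  then obtain a b where q: "q = of_int a / of_int b"
    by (auto elim: Rats_cases')
  have of_nat: "of_nat n \<in> K" for n
    by (induct n) (auto intro: subfield_CC_closed[OF K])
  have of_int: "of_int i \<in> K" for i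
    using of_nat[of "nat i"] subfield_CC_closed(3)[OF K of_nat[of "nat (-i)"]]
    by (cases "i \<ge> 0") simp_all
  show "q \<in> K"
    unfolding q by (intro subfield_CC_closed(8)[OF K] of_int)
qed

lemma rel_degree_eq:
  assumes "subfield K CC" "CC.dimension n K E"
  shows "rel_degree E K = n"
  unfolding rel_degree_def using CC.dimension_is_inj[OF assms(1)] assms(2) by blast

lemma has_degree_pos:
  assumes "subfield Z CC" "has_degree Z N"
  shows "N > 0"
proof (rule ccontr)
  assume "\<not> N > 0"
  then have "CC.dimension 0 \<rat> Z"
    using assms(2) unfolding has_degree_def by simp
  then have "Z = {0}"
    using CC.dimension_zero[OF subfield_CC_Rats] by simp
  with subfield_CC_closed(1)[OF assms(1)] show False
    by simp
qed

section \<open>Rational polynomials and simple extensions of Q\<close>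

(* HOL-Algebra represents polynomials as coefficient lists, leading coefficient first. *)
definition to_univ_poly :: "rat poly \<Rightarrow> complex list" where
  "to_univ_poly f = rev (map of_rat (coeffs f))"

interpretation of_rat_poly: map_poly_idom_hom "of_rat :: rat \<Rightarrow> complex" ..

lemma map_poly_of_rat_of_int:
  "map_poly (of_rat :: rat \<Rightarrow> complex) (map_poly of_int f) = map_poly of_int f"
  by (simp add: map_poly_map_poly o_def)

lemma eval_CC: "CC.eval p x = poly (Poly (rev p)) x"
proof (induct p)
  case (Cons a p)
  have "CC.eval (a # p) x = a * x ^ length p + CC.eval p x"
    by simp
  also have "\<dots> = poly (Poly (rev (a # p))) x"
    using Cons by (simp add: Poly_append poly_monom)
  finally show ?case .
qed simp

lemma to_univ_poly_carrier: "to_univ_poly f \<in> carrier (univ_poly CC \<rat>)"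
proof (cases "f = 0")
  case False
  then have "hd (to_univ_poly f) \<noteq> 0"
    by (simp add: to_univ_poly_def hd_rev last_map last_coeffs_eq_coeff_degree)
  moreover have "set (to_univ_poly f) \<subseteq> \<rat>"
    by (auto simp: to_univ_poly_def)
  ultimately show ?thesis
    unfolding univ_poly_carrier[symmetric] polynomial_def by simp
qed (simp add: to_univ_poly_def univ_poly_zero_closed)

lemma to_univ_poly_eq_Nil_iff [simp]: "to_univ_poly f = [] \<longleftrightarrow> f = 0"
  by (simp add: to_univ_poly_def)

lemma length_to_univ_poly [simp]: "f \<noteq> 0 \<Longrightarrow> length (to_univ_poly f) = Suc (degree f)"
  by (simp add: to_univ_poly_def length_coeffs_degree)

lemma eval_to_univ_poly [simp]: "CC.eval (to_univ_poly f) x = poly (map_poly of_rat f) x"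
  unfolding to_univ_poly_def eval_CC by (simp add: map_poly_def)

lemma carrier_univ_poly_RatsE:
  assumes "p \<in> carrier (univ_poly CC \<rat>)"
  obtains g where "p = to_univ_poly g"
proof -
  have p: "set p \<subseteq> \<rat>" "p \<noteq> [] \<Longrightarrow> hd p \<noteq> 0"
    using assms unfolding univ_poly_carrier[symmetric] polynomial_def by auto
  have "\<forall>y\<in>set p. \<exists>r. y = of_rat r"
    using p(1) by (auto elim: Rats_cases)
  then have "\<exists>rs. p = map of_rat rs"
    by (simp add: ex_map_conv)
  then obtain rs where rs: "p = map of_rat rs" ..
  have "coeffs (Poly (rev rs)) = rev rs"
    using p(2) rs by (cases rs) (auto simp: strip_while_def)
  then have "p = to_univ_poly (Poly (rev rs))"
    unfolding to_univ_poly_def rs by (simp add: rev_map)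
  then show ?thesis
    by (rule that)
qed

lemma carrier_univ_poly_mono:
  "p \<in> carrier (univ_poly CC K) \<Longrightarrow> K \<subseteq> K' \<Longrightarrow> p \<in> carrier (univ_poly CC K')"
  unfolding univ_poly_carrier[symmetric] polynomial_def by auto

lemma algebraic_if_rat_root:
  assumes "f \<noteq> 0" "poly (map_poly of_rat f) x = 0"
  shows "(CC.algebraic over \<rat>) x"
  by (rule CC.algebraicI[OF to_univ_poly_carrier]) (use assms in auto)

lemma subfield_simple_extension_Rats:
  assumes "\<rat> \<subseteq> K" "subfield K CC" "(CC.algebraic over \<rat>) x"
  shows "subfield (CC.simple_extension K x) CC"
  using CC.simple_extension_is_subfield[OF assms(2)] CC.algebraic_mono[OF assms(1,3)] by simp

lemma irreducible\<^sub>d_root_degree_le: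
  fixes f g :: "rat poly" and x :: complex
  assumes irr: "irreducible\<^sub>d f" and "g \<noteq> 0"
    and fx: "poly (map_poly of_rat f) x = 0" and gx: "poly (map_poly of_rat g) x = 0"
  shows "degree f \<le> degree g"
proof -
  define h where "h = gcd f g"
  have "h = fst (bezout_coefficients f g) * f + snd (bezout_coefficients f g) * g"
    unfolding h_def by (simp add: bezout_coefficients_fst_snd)
  then have hx: "poly (map_poly of_rat h) x = 0"
    using fx gx by (simp add: hom_distribs)
  have "h \<noteq> 0"
    unfolding h_def using \<open>g \<noteq> 0\<close> by simp
  have "degree h \<noteq> 0"
  proof
    assume "degree h = 0"
    then obtain c where "h = [:c:]"
      by (rule degree_eq_zeroE)
    with hx \<open>h \<noteq> 0\<close> show False
      by simp
  qed
  obtain k where fk: "f = h * k"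
    unfolding h_def by (meson gcd_dvd1 dvdE)
  have "f \<noteq> 0"
    using irr by auto
  with fk \<open>degree h \<noteq> 0\<close> have "degree k < degree f"
    by (auto simp: degree_mult_eq)
  with irr fk have "degree f \<le> degree h"
    by (meson irreducible\<^sub>dD(2) not_less)
  also have "degree h \<le> degree g"
    unfolding h_def using \<open>g \<noteq> 0\<close> by (intro dvd_imp_degree_le) auto
  finally show ?thesis .
qed

lemma dimension_simple_extension_Rats:
  assumes irr: "irreducible\<^sub>d f" and fx: "poly (map_poly of_rat f) x = 0"
  shows "CC.dimension (degree f) \<rat> (CC.simple_extension \<rat> x)"
proof -
  have "f \<noteq> 0"
    using irr by auto
  then have alg: "(CC.algebraic over \<rat>) x"
    using algebraic_if_rat_root fx by blast
  have "x \<in> carrier CC"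
    by simp
  note Irr = CC.IrrE[OF subfield_CC_Rats this alg]
  have "CC.Irr \<rat> x pdivides\<^bsub>CC\<^esub> to_univ_poly f"
    by (rule CC.Irr_minimal[OF subfield_CC_Rats _ alg to_univ_poly_carrier]) (simp_all add: fx)
  from CC.pdivides_imp_degree_le[OF subfieldE(1)[OF subfield_CC_Rats] Irr(1) to_univ_poly_carrier
      _ this] \<open>f \<noteq> 0\<close>
  have Irr_le: "length (CC.Irr \<rat> x) - 1 \<le> degree f"
    by simp
  obtain g where g: "CC.Irr \<rat> x = to_univ_poly g"
    using carrier_univ_poly_RatsE[OF Irr(1)] .
  have "CC.Irr \<rat> x \<noteq> []"
    using CC.pirreducibleE(1)[OF subfieldE(1)[OF subfield_CC_Rats] Irr(1,2)] .
  then have "g \<noteq> 0"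
    using g by simp
  moreover have "poly (map_poly of_rat g) x = 0"
    using Irr(4) g by simp
  ultimately have "degree f \<le> length (CC.Irr \<rat> x) - 1"
    using irreducible\<^sub>d_root_degree_le[OF irr _ fx] g by simp
  with Irr_le CC.dimension_simple_extension[OF subfield_CC_Rats _ alg] show ?thesis
    by simp
qed

lemma eisenstein_degree_zero_factor:
  fixes g h :: "int poly" and q :: int
  assumes q: "Factorial_Ring.prime q" and low: "\<forall>i<degree (g * h). q dvd coeff (g * h) i"
    and h0: "\<not> q dvd coeff h 0" and lead: "\<not> q dvd lead_coeff g"
    and "h \<noteq> 0"
  shows "degree h = 0"
proof -
  define r where "r = (LEAST i. \<not> q dvd coeff g i)"
  have r: "\<not> q dvd coeff g r"
    unfolding r_def by (rule LeastI[of _ "degree g"]) (use lead in simp)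
  have "r \<le> degree g"
    unfolding r_def by (rule Least_le) (use lead in simp)
  have below_r: "q dvd coeff g i" if "i < r" for i
    using that unfolding r_def by (rule not_less_Least[THEN not_not[THEN iffD1]])
  have "coeff (g * h) r = (\<Sum>i<r. coeff g i * coeff h (r - i)) + coeff g r * coeff h 0"
    by (simp add: coeff_mult lessThan_Suc_atMost[symmetric])
  moreover have "q dvd (\<Sum>i<r. coeff g i * coeff h (r - i))"
    by (intro dvd_sum) (simp add: below_r)
  moreover have "\<not> q dvd coeff g r * coeff h 0"
    using q r h0 by (simp add: prime_dvd_mult_iff)
  ultimately have "\<not> q dvd coeff (g * h) r"
    by (metis dvd_add_right_iff)
  with low have "degree (g * h) \<le> r"
    by (meson not_less)
  moreover have "g \<noteq> 0"
    using lead by auto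
  ultimately show ?thesis
    using \<open>r \<le> degree g\<close> \<open>h \<noteq> 0\<close> by (simp add: degree_mult_eq)
qed

lemma eisenstein_irreducible\<^sub>d:
  fixes f :: "int poly" and q :: int
  assumes q: "Factorial_Ring.prime q" and lead: "\<not> q dvd lead_coeff f" and deg: "degree f \<ge> 1"
    and low: "\<forall>i<degree f. q dvd coeff f i" and const: "\<not> q\<^sup>2 dvd coeff f 0"
  shows "irreducible\<^sub>d (map_poly rat_of_int f)"
proof
  show "degree (map_poly rat_of_int f) > 0"
    using deg by simp
  fix g h
  assume dg: "degree g < degree (map_poly rat_of_int f)" and dh: "degree h < degree (map_poly rat_of_int f)"
    and gh: "map_poly rat_of_int f = g * h"
  obtain g' h' where fgh: "f = g' * h'" and "degree g' = degree g" "degree h' = degree h"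
    using rat_to_int_factor[OF gh] by blast
  with dg dh have deg_lt: "degree g' < degree f" "degree h' < degree f"
    by simp_all
  have nz: "g' \<noteq> 0" "h' \<noteq> 0"
    using lead fgh by auto
  have lead': "\<not> q dvd lead_coeff g'" "\<not> q dvd lead_coeff h'"
    using lead fgh by (auto simp: lead_coeff_mult)
  have "\<not> (q dvd coeff g' 0 \<and> q dvd coeff h' 0)"
    using const fgh by (auto simp: power2_eq_square coeff_mult_0 intro: mult_dvd_mono)
  then consider "\<not> q dvd coeff h' 0" | "\<not> q dvd coeff g' 0"
    by blast
  then show False
  proof cases
    case 1
    then have "degree h' = 0"
      using eisenstein_degree_zero_factor[OF q _ _ lead'(1) nz(2)] low fgh by simp
    with deg_lt(1) fgh nz show False
      by (simp add: degree_mult_eq)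
  next
    case 2
    then have "degree g' = 0"
      using eisenstein_degree_zero_factor[OF q _ _ lead'(2) nz(1)] low fgh by (simp add: mult.commute)
    with deg_lt(2) fgh nz show False
      by (simp add: degree_mult_eq)
  qed
qed

section \<open>Cyclotomic fields\<close>

lemma coeff_x_plus_1_power: "coeff ([:1, 1:] ^ n :: 'a :: comm_semiring_1 poly) i = of_nat (n choose i)"
proof (cases "i \<le> n")
  case True
  then show ?thesis
    using coeff_linear_poly_power[of i n 1 1] by simp
next
  case False
  have "degree ([:1, 1:] ^ n :: 'a poly) \<le> n"
    using degree_power_le[of "[:1, 1:] :: 'a poly" n] by simp
  with False show ?thesis
    by (simp add: coeff_eq_0 binomial_eq_0)
qed

lemma even_power_of_2_choose:
  assumes "0 < i" "i < 2 ^ k"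
  shows "even ((2::nat) ^ k choose i)"
proof (rule ccontr)
  assume odd: "odd ((2::nat) ^ k choose i)"
  obtain i' where i': "i = Suc i'"
    using assms(1) by (cases i) auto
  have "i * (2 ^ k choose i) = 2 ^ k * ((2 ^ k - 1) choose i')"
    using binomial_absorption[of i' "2 ^ k"] i' by simp
  then have "2 ^ k dvd i * ((2::nat) ^ k choose i)"
    by simp
  moreover have "coprime ((2::nat) ^ k) (2 ^ k choose i)"
    using odd by (simp add: coprime_left_2_iff_odd)
  ultimately have "2 ^ k dvd i"
    by (simp add: coprime_dvd_mult_left_iff)
  with assms show False
    by (simp add: nat_dvd_not_less)
qed

definition zeta :: "nat \<Rightarrow> complex" where
  "zeta N = cis (2 * pi / real N)"

lemma zeta_power: "zeta N ^ k = cis (2 * pi * real k / real N)"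
  unfolding zeta_def by (simp add: DeMoivre mult_ac)

lemma mu_eq_zeta_powers:
  assumes "N > 0"
  shows "mu N = (\<lambda>k. zeta N ^ k) ` {..<N}"
  using bij_betw_roots_unity[OF assms] unfolding mu_def zeta_power bij_betw_def by simp

lemma zeta_power_self:
  assumes "N > 0"
  shows "zeta N ^ N = 1"
  using assms by (simp add: zeta_power complex_eq_iff)

lemma zeta_neq_1:
  assumes "N > 1"
  shows "zeta N \<noteq> 1"
proof
  assume "zeta N = 1"
  then have eq: "(\<lambda>k. cis (2 * pi * real k / real N)) 1 = (\<lambda>k. cis (2 * pi * real k / real N)) 0"
    unfolding zeta_def by simp
  have "inj_on (\<lambda>k. cis (2 * pi * real k / real N)) {..<N}"
    using bij_betw_roots_unity[of N] assms by (simp add: bij_betw_def)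
  from inj_onD[OF this eq] assms show False
    by simp
qed

lemma subfield_cyc: "subfield (cyc N) CC"
  unfolding cyc_def by (rule field.generate_field_is_subfield[OF field_CC]) simp

lemma Rats_subset_cyc: "\<rat> \<subseteq> cyc N"
  by (rule Rats_subset_subfield_CC[OF subfield_cyc])

lemma mu_subset_cyc: "mu N \<subseteq> cyc N"
  unfolding cyc_def by (auto intro: generate_field.incl)

lemma cyc_mono:
  assumes "a dvd b"
  shows "cyc a \<subseteq> cyc b"
proof -
  have "mu a \<subseteq> mu b"
    using assms unfolding mu_def by (auto elim!: dvdE simp: power_mult)
  then show ?thesis
    unfolding cyc_def by (intro field.mono_generate_field[OF field_CC]) auto
qed

lemma cyc_power_mono: "a \<le> b \<Longrightarrow> cyc (p ^ a) \<subseteq> cyc (p ^ b)"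
  by (intro cyc_mono le_imp_power_dvd)

lemma algebraic_zeta_minus_1:
  assumes "N > 0"
  shows "(CC.algebraic over \<rat>) (zeta N - 1)"
proof (rule algebraic_if_rat_root)
  have "coeff ([:1, 1:] ^ N - 1 :: rat poly) N = 1"
    unfolding coeff_diff coeff_x_plus_1_power using assms by (simp add: coeff_1)
  then show "[:1, 1:] ^ N - 1 \<noteq> (0 :: rat poly)"
    by auto
  show "poly (map_poly of_rat ([:1, 1:] ^ N - 1)) (zeta N - 1) = 0"
    by (simp add: hom_distribs zeta_power_self[OF assms])
qed

(* The generator zeta N - 1 rather than zeta N makes the minimal polynomials Eisenstein. *)
lemma cyc_eq_simple_extension:
  assumes N: "N > 0"
  shows "cyc N = CC.simple_extension \<rat> (zeta N - 1)"
proof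
  let ?E = "CC.simple_extension \<rat> (zeta N - 1)"
  have E: "subfield ?E CC"
    using subfield_simple_extension_Rats[OF order_refl subfield_CC_Rats algebraic_zeta_minus_1[OF N]] .
  have "zeta N - 1 \<in> ?E"
    by (rule CC.simple_extension_mem[OF subfieldE(1)[OF subfield_CC_Rats]]) simp
  then have "zeta N \<in> ?E"
    using subfield_CC_closed(5)[OF E _ subfield_CC_closed(1)[OF E]] by force
  then show "cyc N \<subseteq> ?E"
    unfolding cyc_def using mu_eq_zeta_powers[OF N] subfield_CC_closed(9)[OF E]
    by (intro field.generate_field_min_subfield1[OF field_CC _ E]) auto
  have "zeta N \<in> cyc N"
    using mu_subset_cyc zeta_power_self[OF N] unfolding mu_def by auto
  then have "zeta N - 1 \<in> cyc N"
    using subfield_CC_closed(1,6)[OF subfield_cyc] by blast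
  then show "?E \<subseteq> cyc N"
    by (rule CC.simple_extension_subring_incl[OF subfieldE(1)[OF subfield_cyc] Rats_subset_cyc])
qed

lemma finite_dimension_cyc:
  assumes "N > 0"
  obtains D where "CC.dimension D \<rat> (cyc N)"
  using CC.dimension_simple_extension[OF subfield_CC_Rats _ algebraic_zeta_minus_1[OF assms]]
    cyc_eq_simple_extension[OF assms] by auto

lemma dimension_cyc_power_of_2: "CC.dimension (2 ^ k) \<rat> (cyc (2 ^ (k + 1)))"
proof -
  define n :: nat where "n = 2 ^ k"
  define F :: "int poly" where "F = [:1, 1:] ^ n + 1"
  have coeff_F: "coeff F i = (if i = 0 then 2 else int (n choose i))" for i
    unfolding F_def coeff_add coeff_x_plus_1_power by (simp add: coeff_1)
  have "n \<noteq> 0"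
    by (simp add: n_def)
  have deg: "degree F = n"
  proof (rule antisym)
    show "degree F \<le> n"
      by (rule degree_le) (simp add: coeff_F)
    show "n \<le> degree F"
      by (rule le_degree) (use \<open>n \<noteq> 0\<close> in \<open>simp add: coeff_F\<close>)
  qed
  have irr: "irreducible\<^sub>d (map_poly rat_of_int F)"
  proof (rule eisenstein_irreducible\<^sub>d[of 2])
    show "\<forall>i<degree F. 2 dvd coeff F i"
      using even_power_of_2_choose[of _ k] by (auto simp: deg coeff_F n_def)
  qed (use deg \<open>n \<noteq> 0\<close> in \<open>simp_all add: coeff_F\<close>)
  define z where "z = zeta (2 ^ (k + 1))"
  have "z ^ n = cis (2 * pi * real (2 ^ k) / real (2 ^ (k + 1)))"
    unfolding z_def n_def zeta_power ..
  also have "\<dots> = -1"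
    by (simp add: complex_eq_iff)
  finally have "poly (map_poly of_rat (map_poly rat_of_int F)) (z - 1) = 0"
    unfolding map_poly_of_rat_of_int F_def by (simp add: hom_distribs)
  from dimension_simple_extension_Rats[OF irr this] show ?thesis
    using deg cyc_eq_simple_extension[of "2 ^ (k + 1)"] unfolding z_def n_def by simp
qed

lemma dimension_cyc_prime:
  assumes p: "Factorial_Ring.prime (p::nat)"
  shows "CC.dimension (p - 1) \<rat> (cyc p)"
proof -
  have p2: "p \<ge> 2"
    using p by (simp add: prime_ge_2_nat)
  (* G is the p-th cyclotomic polynomial shifted by one, ((X + 1)^p - 1) / X. *)
  define G :: "int poly" where "G = (\<Sum>i<p. monom (int (p choose (i + 1))) i)"
  have coeff_G: "coeff G j = (if j < p then int (p choose (j + 1)) else 0)" for j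
    unfolding G_def by (simp add: coeff_sum coeff_monom)
  have deg: "degree G = p - 1"
  proof (rule antisym)
    show "degree G \<le> p - 1"
      by (rule degree_le) (auto simp: coeff_G)
    show "p - 1 \<le> degree G"
      by (rule le_degree) (use p2 in \<open>simp add: coeff_G\<close>)
  qed
  have irr: "irreducible\<^sub>d (map_poly rat_of_int G)"
  proof (rule eisenstein_irreducible\<^sub>d[of "int p"])
    show "\<forall>i<degree G. int p dvd coeff G i"
      using p deg by (auto simp: coeff_G intro: dvd_choose_prime)
    have "\<not> int p * int p dvd int p"
      using p2 by (auto dest: zdvd_imp_le)
    then show "\<not> (int p)\<^sup>2 dvd coeff G 0"
      using p2 by (simp add: coeff_G power2_eq_square)
  qed (use p p2 deg in \<open>simp_all add: coeff_G\<close>)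
  define y where "y = zeta p - 1"
  have "y \<noteq> 0"
    unfolding y_def using zeta_neq_1[of p] p2 by simp
  have "poly (map_poly of_int G) y * y = (\<Sum>i<p. of_nat (p choose (i + 1)) * y ^ (i + 1))"
    unfolding G_def by (simp add: hom_distribs poly_sum poly_monom sum_distrib_right mult_ac)
  also have "\<dots> = (\<Sum>j<Suc p. of_nat (p choose j) * y ^ j) - 1"
    by (subst sum.lessThan_Suc_shift) simp
  also have "\<dots> = (y + 1) ^ p - 1"
    by (simp add: binomial_ring lessThan_Suc_atMost mult_ac)
  also have "\<dots> = 0"
    unfolding y_def using zeta_power_self[of p] p2 by simp
  finally have "poly (map_poly of_rat (map_poly rat_of_int G)) y = 0"
    unfolding map_poly_of_rat_of_int using \<open>y \<noteq> 0\<close> by simp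
  from dimension_simple_extension_Rats[OF irr this] show ?thesis
    using deg cyc_eq_simple_extension[of p] p2 unfolding y_def by simp
qed

lemma dimension_cyc_prime_power_ge:
  assumes "Factorial_Ring.prime (p::nat)" "m \<ge> 1" "CC.dimension D \<rat> (cyc (p ^ m))"
  shows "p - 1 \<le> D"
proof -
  have "cyc p \<subseteq> cyc (p ^ m)"
    using assms(2) by (intro cyc_mono) (simp add: dvd_power)
  then show ?thesis
    using CC.dimension_mono[OF subfield_CC_Rats dimension_cyc_prime[OF assms(1)] assms(3)] by simp
qed

section \<open>The field F^(p) and the invariants m(F,p) and t(F,p)\<close>

lemma mem_cyc_inf_iff: "x \<in> cyc_inf p \<longleftrightarrow> (\<exists>a. x \<in> cyc (p ^ a))"
  by (simp add: cyc_inf_def)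

lemma subfield_cyc_inf: "subfield (cyc_inf p) CC"
  unfolding subfield_CC_iff
proof (intro conjI ballI impI)
  show "1 \<in> cyc_inf p"
    using subfield_CC_closed(1)[OF subfield_cyc] by (auto simp: mem_cyc_inf_iff)
next
  fix x
  assume "x \<in> cyc_inf p"
  then obtain a where "x \<in> cyc (p ^ a)"
    by (auto simp: mem_cyc_inf_iff)
  then have "-x \<in> cyc (p ^ a)" "inverse x \<in> cyc (p ^ a)"
    using subfield_CC_closed(3,7)[OF subfield_cyc] by auto
  then show "-x \<in> cyc_inf p" "inverse x \<in> cyc_inf p"
    unfolding mem_cyc_inf_iff by blast+
next
  fix x y
  assume "x \<in> cyc_inf p" "y \<in> cyc_inf p"
  then obtain a b where "x \<in> cyc (p ^ a)" "y \<in> cyc (p ^ b)"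
    by (auto simp: mem_cyc_inf_iff)
  then have "x \<in> cyc (p ^ max a b)" "y \<in> cyc (p ^ max a b)"
    using cyc_power_mono[of a "max a b" p] cyc_power_mono[of b "max a b" p] by auto
  then have "x * y \<in> cyc (p ^ max a b)" "x + y \<in> cyc (p ^ max a b)"
    using subfield_CC_closed(4,5)[OF subfield_cyc] by auto
  then show "x * y \<in> cyc_inf p" "x + y \<in> cyc_inf p"
    unfolding mem_cyc_inf_iff by blast+
qed

lemma finite_dimension_subset_cyc_power:
  assumes F: "CC.dimension a \<rat> F" and sub: "F \<subseteq> cyc_inf p"
  obtains M where "F \<subseteq> cyc (p ^ M)"
proof -
  obtain Vs where Vs: "set Vs \<subseteq> carrier CC" "CC.Span \<rat> Vs = F"
    using CC.exists_base[OF subfield_CC_Rats F] by blast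
  have "\<forall>v\<in>set Vs. \<exists>m. v \<in> cyc (p ^ m)"
    using CC.Span_base_incl[OF subfield_CC_Rats Vs(1)] Vs(2) sub by (auto simp: mem_cyc_inf_iff)
  from bchoice[OF this] obtain level where level: "\<forall>v\<in>set Vs. v \<in> cyc (p ^ level v)" ..
  define M where "M = Max (insert 0 (level ` set Vs))"
  have "level v \<le> M" if "v \<in> set Vs" for v
    unfolding M_def using that by simp
  then have "set Vs \<subseteq> cyc (p ^ M)"
    using level cyc_power_mono[of _ M p] by blast
  then have "CC.Span \<rat> Vs \<subseteq> cyc (p ^ M)"
    by (intro CC.subalgebra_Span_incl[OF subfield_CC_Rats
          CC.subfield_imp_subalgebra[OF subfield_cyc Rats_subset_cyc]])
  with Vs(2) show ?thesis
    using that by blast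
qed

lemma subfield_Fp:
  assumes "subfield Z CC"
  shows "subfield (Fp Z p) CC"
  unfolding subfield_CC_iff
proof (intro conjI ballI impI)
  note Z = subfield_CC_closed[OF assms] and C = subfield_CC_closed[OF subfield_cyc_inf[of p]]
  show "1 \<in> Fp Z p"
    unfolding Fp_def using Z(1) C(1) by simp
  fix x
  assume "x \<in> Fp Z p"
  then have x: "x \<in> Z" "x \<in> cyc_inf p"
    unfolding Fp_def by auto
  show "-x \<in> Fp Z p" "inverse x \<in> Fp Z p"
    unfolding Fp_def using Z(3,7)[OF x(1)] C(3,7)[OF x(2)] by simp_all
  fix y
  assume "y \<in> Fp Z p"
  then have y: "y \<in> Z" "y \<in> cyc_inf p"
    unfolding Fp_def by auto
  show "x * y \<in> Fp Z p" "x + y \<in> Fp Z p"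
    unfolding Fp_def using Z(4,5)[OF x(1) y(1)] C(4,5)[OF x(2) y(2)] by simp_all
qed

lemma Rats_subset_Fp: "subfield Z CC \<Longrightarrow> \<rat> \<subseteq> Fp Z p"
  by (rule Rats_subset_subfield_CC[OF subfield_Fp])

lemma m_idx_admissible:
  assumes "CC.dimension a \<rat> (Fp Z p)" "p > 0"
  shows "m_idx Z p \<ge> 1" "p ^ m_idx Z p \<noteq> 2" "Fp Z p \<subseteq> cyc (p ^ m_idx Z p)"
proof -
  have "Fp Z p \<subseteq> cyc_inf p"
    unfolding Fp_def by blast
  then obtain M where M: "Fp Z p \<subseteq> cyc (p ^ M)"
    by (rule finite_dimension_subset_cyc_power[OF assms(1)])
  have "p ^ (M + 2) \<noteq> 2"
  proof (cases "p = 1")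
    case False
    with assms(2) have "2 \<le> p"
      by simp
    then have "2 ^ 2 \<le> p ^ 2"
      by (rule power_mono) simp
    also have "p ^ 2 \<le> p ^ (M + 2)"
      using \<open>2 \<le> p\<close> by (intro power_increasing) simp_all
    finally have "4 \<le> p ^ (M + 2)"
      by simp
    then show ?thesis
      by linarith
  qed simp
  moreover have "Fp Z p \<subseteq> cyc (p ^ (M + 2))"
    using M cyc_power_mono[of M "M + 2" p] by (simp add: order_trans)
  ultimately have "M + 2 \<in> {m. m \<ge> 1 \<and> Fp Z p \<subseteq> cyc (p ^ m) \<and> p ^ m \<noteq> 2}"
    by simp
  then have "{m. m \<ge> 1 \<and> Fp Z p \<subseteq> cyc (p ^ m) \<and> p ^ m \<noteq> 2} \<noteq> {}"
    by blast
  from Inf_nat_def1[OF this]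
  have "m_idx Z p \<in> {m. m \<ge> 1 \<and> Fp Z p \<subseteq> cyc (p ^ m) \<and> p ^ m \<noteq> 2}"
    unfolding m_idx_def .
  then show "m_idx Z p \<ge> 1" "p ^ m_idx Z p \<noteq> 2" "Fp Z p \<subseteq> cyc (p ^ m_idx Z p)"
    by simp_all
qed

lemma m_idx_le:
  assumes "m \<ge> 1" "Fp Z p \<subseteq> cyc (p ^ m)" "p ^ m \<noteq> 2"
  shows "m_idx Z p \<le> m"
  unfolding m_idx_def Inf_nat_def using assms by (intro Least_le) simp

lemma Fp_dimensions:
  assumes NF: "number_field Z" and deg: "has_degree Z N" and p: "p > 0"
  obtains a where "CC.dimension a \<rat> (Fp Z p)" "a dvd N"
    "CC.dimension (a * t_idx Z p) \<rat> (cyc (p ^ m_idx Z p))"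
    "CC.dimension (t_idx Z p) (Fp Z p) (cyc (p ^ m_idx Z p))"
proof -
  have Z: "subfield Z CC"
    using NF unfolding number_field_def by blast
  note F = subfield_Fp[OF Z, of p]
  have FZ: "Fp Z p \<subseteq> Z"
    unfolding Fp_def by blast
  obtain a b where a: "CC.dimension a \<rat> (Fp Z p)" and "N = a * b"
    using CC.dimension_tower[OF subfield_CC_Rats F Z Rats_subset_Fp[OF Z] FZ deg[unfolded has_degree_def]] .
  then have "a dvd N"
    by simp
  have "p ^ m_idx Z p > 0"
    using p by simp
  then obtain D where D: "CC.dimension D \<rat> (cyc (p ^ m_idx Z p))"
    by (rule finite_dimension_cyc)
  obtain a' t where "CC.dimension a' \<rat> (Fp Z p)"
      and t: "CC.dimension t (Fp Z p) (cyc (p ^ m_idx Z p))"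
    using CC.dimension_tower[OF subfield_CC_Rats F subfield_cyc Rats_subset_Fp[OF Z] m_idx_admissible(3)[OF a p] D] .
  have "t_idx Z p = t"
    unfolding t_idx_def using rel_degree_eq[OF F t] .
  with t have "CC.dimension (t_idx Z p) (Fp Z p) (cyc (p ^ m_idx Z p))"
    by simp
  with a \<open>a dvd N\<close> CC.telescopic_base[OF subfield_CC_Rats F a this] show ?thesis
    using that by blast
qed

lemma Fp_2_dimensions:
  assumes NF: "number_field Z" and deg: "has_degree Z N"
  obtains e j where "CC.dimension (2 ^ e) \<rat> (Fp Z 2)" "e \<le> multiplicity 2 N"
    "m_idx Z 2 = e + j + 1" "t_idx Z 2 = 2 ^ j"
    "CC.dimension (2 ^ j) (Fp Z 2) (cyc (2 ^ m_idx Z 2))"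
proof -
  let ?m = "m_idx Z 2"
  obtain a where a: "CC.dimension a \<rat> (Fp Z 2)" and "a dvd N"
      and D: "CC.dimension (a * t_idx Z 2) \<rat> (cyc (2 ^ ?m))"
      and t: "CC.dimension (t_idx Z 2) (Fp Z 2) (cyc (2 ^ ?m))"
    by (rule Fp_dimensions[OF NF deg pos2])
  have "?m \<ge> 2"
    using m_idx_admissible(1,2)[OF a] by (cases "?m = 1") auto
  then have "CC.dimension (2 ^ (?m - 1)) \<rat> (cyc (2 ^ ?m))"
    using dimension_cyc_power_of_2[of "?m - 1"] by simp
  then have at: "a * t_idx Z 2 = 2 ^ (?m - 1)"
    using CC.dimension_is_inj[OF subfield_CC_Rats D] by blast
  then have "a dvd 2 ^ (?m - 1)"
    by (metis dvd_triv_left)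
  then obtain e where e: "e \<le> ?m - 1" "a = 2 ^ e"
    by (auto simp: divides_primepow_nat)
  with at have "t_idx Z 2 * 2 ^ e = 2 ^ (?m - 1 - e) * 2 ^ e"
    by (simp add: power_add[symmetric] mult.commute)
  then have tj: "t_idx Z 2 = 2 ^ (?m - 1 - e)"
    by simp
  have "N > 0"
    using has_degree_pos NF deg unfolding number_field_def by blast
  then have "e \<le> multiplicity 2 N"
    using \<open>a dvd N\<close> e(2) by (intro multiplicity_geI) simp_all
  moreover have "?m = e + (?m - 1 - e) + 1"
    using e \<open>?m \<ge> 2\<close> by simp
  ultimately show ?thesis
    using that[of e "?m - 1 - e"] a e(2) tj t by simp
qed

section \<open>The 2-adic valuation of the Schur bound\<close>

abbreviation v2 :: "nat \<Rightarrow> nat" where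
  "v2 x \<equiv> multiplicity (2::nat) x"

definition schur_exponent :: "nat \<Rightarrow> nat \<Rightarrow> nat \<Rightarrow> nat" where
  "schur_exponent s m t = (s - s div t) + m * (s div t) + v2 (fact (s div t))"

lemma schur_factor_neq_0: "Factorial_Ring.prime p \<Longrightarrow> schur_factor s F p \<noteq> 0"
  unfolding schur_factor_def ppart_def by simp

lemma v2_schur_bound:
  assumes fin: "finite {p. Factorial_Ring.prime p \<and> schur_factor s F p \<noteq> 1}"
  shows "v2 (schur_bound s F) = schur_exponent s (m_idx F 2) (t_idx F 2)"
proof -
  define S where "S = {p. Factorial_Ring.prime p \<and> schur_factor s F p \<noteq> 1}"
  define q where "q = s div t_idx F 2"
  have "finite S"
    using fin unfolding S_def .
  have v2_factor: "v2 (schur_factor s F p) = (if p = 2 then m_idx F 2 * q + v2 (fact q) else 0)"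
    if p: "Factorial_Ring.prime p" for p
  proof -
    have "schur_factor s F p =
        p ^ (m_idx F p * (s div t_idx F p) + multiplicity p (fact (s div t_idx F p)))"
      unfolding schur_factor_def ppart_def by (simp add: power_add)
    then show ?thesis
      using p by (auto simp: q_def multiplicity_distinct_prime_power)
  qed
  have nonzero: "schur_factor s F p \<noteq> 0" if "p \<in> S" for p
    using that schur_factor_neq_0 unfolding S_def by blast
  then have "0 \<notin> schur_factor s F ` S"
    by force
  with \<open>finite S\<close> have "v2 (\<Prod>p\<in>S. schur_factor s F p) = (\<Sum>p\<in>S. v2 (schur_factor s F p))"
    by (intro prime_elem_multiplicity_prod_distrib) simp_all
  also have "\<dots> = (\<Sum>p\<in>S. if p = 2 then m_idx F 2 * q + v2 (fact q) else 0)"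
    using v2_factor by (intro sum.cong) (auto simp: S_def)
  also have "\<dots> = m_idx F 2 * q + v2 (fact q)"
  proof (cases "2 \<in> S")
    case False
    then have "schur_factor s F 2 = 1"
      unfolding S_def by simp
    with False v2_factor[of 2] \<open>finite S\<close> show ?thesis
      by simp
  qed (use \<open>finite S\<close> in simp)
  finally have "v2 (\<Prod>p\<in>S. schur_factor s F p) = m_idx F 2 * q + v2 (fact q)" .
  moreover have "(\<Prod>p\<in>S. schur_factor s F p) \<noteq> 0"
    using \<open>finite S\<close> nonzero by simp
  ultimately show ?thesis
    unfolding schur_bound_def schur_exponent_def S_def[symmetric] q_def[symmetric]
    by (simp add: prime_elem_multiplicity_mult_distrib)
qed

lemma finite_schur_primes:
  assumes NF: "number_field Z" and deg: "has_degree Z N"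
  shows "finite {p. Factorial_Ring.prime p \<and> schur_factor s Z p \<noteq> 1}"
proof (rule finite_subset)
  have "schur_factor s Z p = 1" if p: "Factorial_Ring.prime p" and large: "p > N * s + 1" for p
  proof -
    have "p > 0"
      using p by (rule prime_gt_0_nat)
    then obtain a where a: "CC.dimension a \<rat> (Fp Z p)" "a dvd N"
        and D: "CC.dimension (a * t_idx Z p) \<rat> (cyc (p ^ m_idx Z p))"
      using Fp_dimensions[OF NF deg] by blast
    have "p - 1 \<le> a * t_idx Z p"
      using dimension_cyc_prime_power_ge[OF p m_idx_admissible(1)[OF a(1) \<open>p > 0\<close>] D] .
    moreover have "a \<le> N"
      using a(2) has_degree_pos NF deg unfolding number_field_def by (auto intro: dvd_imp_le)
    ultimately have "s < t_idx Z p"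
      using large mult_le_mono[of a N "t_idx Z p" s] by (cases "s < t_idx Z p") auto
    then show ?thesis
      unfolding schur_factor_def ppart_def by simp
  qed
  then show "{p. Factorial_Ring.prime p \<and> schur_factor s Z p \<noteq> 1} \<subseteq> {..N * s + 1}"
    by (auto simp: not_less[symmetric])
qed simp

lemma v2_schur_bound_number_field:
  "number_field Z \<Longrightarrow> has_degree Z N \<Longrightarrow>
    v2 (schur_bound s Z) = schur_exponent s (m_idx Z 2) (t_idx Z 2)"
  by (rule v2_schur_bound[OF finite_schur_primes])

lemma v2_mult: "x \<noteq> 0 \<Longrightarrow> y \<noteq> 0 \<Longrightarrow> v2 (x * y) = v2 x + v2 y"
  by (rule prime_elem_multiplicity_mult_distrib) simp_all

lemma v2_fact_double: "v2 (fact (2 * q)) = q + v2 (fact q)"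
proof (induct q)
  case (Suc q)
  have fact: "fact (2 * Suc q) = (2 * Suc q) * ((2 * q + 1) * fact (2 * q) :: nat)"
    by (simp add: algebra_simps)
  have "v2 ((2 * Suc q) * ((2 * q + 1) * fact (2 * q))) =
      v2 (2 * Suc q) + v2 ((2 * q + 1) * fact (2 * q))"
    by (rule v2_mult) simp_all
  also have "v2 ((2 * q + 1) * fact (2 * q)) = v2 (2 * q + 1) + v2 (fact (2 * q))"
    by (rule v2_mult) simp_all
  finally have "v2 (fact (2 * Suc q)) = v2 (2 * Suc q) + (v2 (2 * q + 1) + v2 (fact (2 * q)))"
    unfolding fact .
  also have "v2 (2 * q + 1) = 0"
    by (rule not_dvd_imp_multiplicity_0) simp
  also have "v2 (2 * Suc q) = Suc (v2 (Suc q))"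
    by (rule multiplicity_times_same) simp_all
  also have "v2 (fact (Suc q)) = v2 (Suc q) + v2 (fact q)"
    using v2_mult[of "Suc q" "fact q"] by simp
  ultimately show ?case
    using Suc by simp
qed simp

lemma v2_fact_power_2_mult: "j * q + v2 (fact q) \<le> v2 (fact (2 ^ j * q))"
proof (induct j)
  case (Suc j)
  have "v2 (fact (2 ^ Suc j * q)) = 2 ^ j * q + v2 (fact (2 ^ j * q))"
    using v2_fact_double[of "2 ^ j * q"] by (simp add: mult_ac)
  moreover have "q \<le> 2 ^ j * q" "Suc j * q = q + j * q"
    by simp_all
  ultimately show ?case
    using Suc by linarith
qed simp

lemma v2_fact_div_power_2: "j * (s div 2 ^ j) + v2 (fact (s div 2 ^ j)) \<le> v2 (fact s)"
proof -
  have "fact (2 ^ j * (s div 2 ^ j)) dvd (fact s :: nat)"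
    by (intro fact_dvd) (simp add: mult.commute)
  then have "v2 (fact (2 ^ j * (s div 2 ^ j))) \<le> v2 (fact s)"
    by (intro dvd_imp_multiplicity_le) simp_all
  with v2_fact_power_2_mult show ?thesis
    by (rule order_trans)
qed

lemma schur_exponent_power_2:
  "schur_exponent s (e + j + 1) (2 ^ j) = s + (e + j) * (s div 2 ^ j) + v2 (fact (s div 2 ^ j))"
  unfolding schur_exponent_def add_mult_distrib using div_le_dividend[of s "2 ^ j"] by linarith

lemma schur_exponent_le:
  assumes "e \<le> n"
  shows "schur_exponent s (e + j + 1) (2 ^ j) \<le> (n + 1) * s + v2 (fact s)"
proof -
  have "e * (s div 2 ^ j) \<le> n * s"
    using assms by (intro mult_le_mono) simp_all
  with v2_fact_div_power_2[of j s] show ?thesis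
    unfolding schur_exponent_power_2 by (simp add: algebra_simps)
qed

lemma schur_exponent_eq_imp:
  assumes "s \<ge> 1" "n \<ge> 1" "e \<le> n"
    and eq: "schur_exponent s (e + j + 1) (2 ^ j) = (n + 1) * s + v2 (fact s)"
  shows "j = 0 \<and> e = n"
proof -
  define q where "q = s div 2 ^ j"
  have "q \<le> s"
    unfolding q_def by simp
  have "e * q \<le> n * q" "n * q \<le> n * s"
    using assms(3) \<open>q \<le> s\<close> by (simp_all add: mult_le_mono1 mult_le_mono2)
  moreover have "n * s \<le> e * q"
    using eq v2_fact_div_power_2[of j s] unfolding schur_exponent_power_2 q_def[symmetric]
    by (simp add: algebra_simps)
  ultimately have "n * q = n * s" "e * q = n * q"
    by linarith+
  then have "q = s"
    using assms(2) by simp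
  with \<open>e * q = n * q\<close> have "e = n"
    using assms(1) by simp
  moreover have "j = 0"
  proof (rule ccontr)
    assume "j \<noteq> 0"
    then have "2 ^ 1 \<le> (2::nat) ^ j"
      by (intro power_increasing) simp_all
    then have "q * 2 \<le> q * 2 ^ j"
      by simp
    also have "q * 2 ^ j \<le> s"
      unfolding q_def by (rule div_times_less_eq_dividend)
    finally show False
      using \<open>q = s\<close> assms(1) by simp
  qed
  ultimately show ?thesis
    by simp
qed

lemma v2_schur_bound_le:
  assumes "number_field Z" "has_degree Z N"
  shows "v2 (schur_bound s Z) \<le> (multiplicity 2 N + 1) * s + v2 (fact s)"
proof -
  obtain e j where "e \<le> multiplicity 2 N" "m_idx Z 2 = e + j + 1" "t_idx Z 2 = 2 ^ j"
    using Fp_2_dimensions[OF assms] by blast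
  then show ?thesis
    using v2_schur_bound_number_field[OF assms] schur_exponent_le by simp
qed

lemma v2_schur_bound_eq_iff:
  assumes NF: "number_field Z" and deg: "has_degree Z N" and "even N" "s \<ge> 1"
  shows "v2 (schur_bound s Z) = (multiplicity 2 N + 1) * s + v2 (fact s) \<longleftrightarrow>
    Fp Z 2 = cyc (2 ^ (multiplicity 2 N + 1))"
proof -
  define n where "n = multiplicity (2::nat) N"
  have Z: "subfield Z CC"
    using NF unfolding number_field_def by blast
  have "n \<ge> 1"
    unfolding n_def using \<open>even N\<close> has_degree_pos[OF Z deg] by (intro multiplicity_geI) simp_all
  obtain e j where e: "CC.dimension (2 ^ e) \<rat> (Fp Z 2)" "e \<le> n"
      and m: "m_idx Z 2 = e + j + 1" and t: "t_idx Z 2 = 2 ^ j"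
      and j: "CC.dimension (2 ^ j) (Fp Z 2) (cyc (2 ^ m_idx Z 2))"
    using Fp_2_dimensions[OF NF deg] unfolding n_def[symmetric] .
  have v2: "v2 (schur_bound s Z) = schur_exponent s (e + j + 1) (2 ^ j)"
    using v2_schur_bound_number_field[OF NF deg] m t by simp
  show ?thesis
    unfolding n_def[symmetric]
  proof
    assume "v2 (schur_bound s Z) = (n + 1) * s + v2 (fact s)"
    then have "j = 0" "e = n"
      using schur_exponent_eq_imp[OF \<open>s \<ge> 1\<close> \<open>n \<ge> 1\<close> e(2)] v2 by simp_all
    then show "Fp Z 2 = cyc (2 ^ (n + 1))"
      using CC.dimension_one_eq[OF subfield_Fp[OF Z] m_idx_admissible(3)[OF e(1)]] j m by simp
  next
    assume Fp: "Fp Z 2 = cyc (2 ^ (n + 1))"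
    have "(2::nat) ^ e = 2 ^ n"
      using CC.dimension_is_inj[OF subfield_CC_Rats e(1)[unfolded Fp] dimension_cyc_power_of_2[of n]] .
    then have "e = n"
      by simp
    have "(2::nat) ^ (n + 1) \<noteq> 2"
      using \<open>n \<ge> 1\<close> by simp
    then have "m_idx Z 2 \<le> n + 1"
      using m_idx_le[of "n + 1" Z 2] Fp by simp
    with m \<open>e = n\<close> have "j = 0"
      by simp
    with v2 \<open>e = n\<close> show "v2 (schur_bound s Z) = (n + 1) * s + v2 (fact s)"
      by (simp add: schur_exponent_def)
  qed
qed

section \<open>A field attaining the maximum\<close>

lemma dimension_simple_extension_coprime:
  assumes K: "subfield K CC" and k: "CC.dimension k \<rat> K"
    and irr: "irreducible\<^sub>d f" and fx: "poly (map_poly of_rat f) x = 0"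
    and cop: "coprime k (degree f)"
  shows "CC.dimension (degree f) K (CC.simple_extension K x)"
proof -
  have QK: "\<rat> \<subseteq> K"
    by (rule Rats_subset_subfield_CC[OF K])
  have "f \<noteq> 0"
    using irr by auto
  then have algQ: "(CC.algebraic over \<rat>) x"
    using algebraic_if_rat_root fx by blast
  have alg: "(CC.algebraic over K) x"
    by (rule CC.algebraic_mono[OF QK algQ])
  have x: "x \<in> carrier CC"
    by simp
  define E where "E = CC.simple_extension K x"
  define r where "r = length (CC.Irr K x) - 1"
  have r: "CC.dimension r K E"
    unfolding E_def r_def by (rule CC.dimension_simple_extension[OF K x alg])
  have "r \<le> degree f"
  proof -
    have fK: "to_univ_poly f \<in> carrier (univ_poly CC K)"
      by (rule carrier_univ_poly_mono[OF to_univ_poly_carrier QK])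
    have "CC.Irr K x pdivides\<^bsub>CC\<^esub> to_univ_poly f"
      by (rule CC.Irr_minimal[OF K x alg fK]) (simp add: fx)
    from CC.pdivides_imp_degree_le[OF subfieldE(1)[OF K] CC.IrrE(1)[OF K x alg] fK _ this]
    show ?thesis
      using \<open>f \<noteq> 0\<close> unfolding r_def by simp
  qed
  have E: "subfield E CC"
    unfolding E_def by (rule subfield_simple_extension_Rats[OF QK K algQ])
  have "\<rat> \<subseteq> CC.simple_extension \<rat> x"
    by (rule CC.simple_extension_incl) simp_all
  moreover have "CC.simple_extension \<rat> x \<subseteq> E"
    unfolding E_def by (rule CC.mono_simple_extension[OF QK])
  moreover have "CC.dimension (k * r) \<rat> E"
    by (rule CC.telescopic_base[OF subfield_CC_Rats K k r])
  ultimately obtain a b where a: "CC.dimension a \<rat> (CC.simple_extension \<rat> x)" and "k * r = a * b"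
    by (rule CC.dimension_tower[OF subfield_CC_Rats
        subfield_simple_extension_Rats[OF order_refl subfield_CC_Rats algQ] E])
  moreover have "a = degree f"
    using CC.dimension_is_inj[OF subfield_CC_Rats a dimension_simple_extension_Rats[OF irr fx]] .
  ultimately have "degree f dvd k * r"
    by simp
  moreover have "coprime (degree f) k"
    using cop coprime_commute by blast
  ultimately have "degree f dvd r"
    by (simp add: coprime_dvd_mult_right_iff)
  moreover have "r \<noteq> 0"
  proof
    assume "r = 0"
    with r have "E = {0}"
      using CC.dimension_zero[OF K] by simp
    with subfield_CC_closed(1)[OF E] show False
      by simp
  qed
  ultimately have "degree f \<le> r"
    by (simp add: dvd_imp_le)
  with \<open>r \<le> degree f\<close> r show ?thesis
    unfolding E_def by simp
qed

lemma irreducible\<^sub>d_X_power_minus_2: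
  assumes "d \<ge> 1"
  shows "irreducible\<^sub>d (map_poly rat_of_int (monom 1 d - 2))" "degree (monom 1 d - 2 :: int poly) = d"
proof -
  define H :: "int poly" where "H = monom 1 d - 2"
  have coeff_H: "coeff H j = (if j = d then 1 else if j = 0 then -2 else 0)" for j
    unfolding H_def using assms by (auto simp: coeff_monom coeff_diff numeral_poly coeff_pCons')
  have deg: "degree H = d"
  proof (rule antisym)
    show "degree H \<le> d"
      by (rule degree_le) (auto simp: coeff_H)
    show "d \<le> degree H"
      by (rule le_degree) (simp add: coeff_H)
  qed
  have "irreducible\<^sub>d (map_poly rat_of_int H)"
    by (rule eisenstein_irreducible\<^sub>d[of 2]) (use deg assms in \<open>auto simp: coeff_H\<close>)
  with deg show "irreducible\<^sub>d (map_poly rat_of_int (monom 1 d - 2))" "degree (monom 1 d - 2 :: int poly) = d"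
    unfolding H_def by simp_all
qed

lemma exists_field_Fp_2_eq_cyc:
  assumes "N > 0"
  defines "n \<equiv> multiplicity (2::nat) N"
  obtains Z where "number_field Z" "has_degree Z N" "cyc (2 ^ (n + 1)) \<subseteq> Z"
    "CC.dimension (N div 2 ^ n) (cyc (2 ^ (n + 1))) Z" "Fp Z 2 = cyc (2 ^ (n + 1))"
proof -
  define d where "d = N div 2 ^ n"
  have N: "N = 2 ^ n * d"
    unfolding d_def n_def by (simp add: multiplicity_dvd)
  have "odd d"
    unfolding d_def n_def using multiplicity_decompose[of N 2] assms(1) by simp
  have "d \<ge> 1"
    using N assms(1) by (cases d) auto
  define K where "K = cyc (2 ^ (n + 1))"
  have K: "subfield K CC" "CC.dimension (2 ^ n) \<rat> K"
    unfolding K_def by (rule subfield_cyc dimension_cyc_power_of_2)+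
  note H = irreducible\<^sub>d_X_power_minus_2[OF \<open>d \<ge> 1\<close>]
  define \<alpha> where "\<alpha> = complex_of_real (root d 2)"
  have "root d 2 ^ d = (2::real)"
    using \<open>d \<ge> 1\<close> by (intro real_root_pow_pos2) auto
  then have "\<alpha> ^ d = 2"
    unfolding \<alpha>_def of_real_power[symmetric] by simp
  then have root: "poly (map_poly of_rat (map_poly rat_of_int (monom 1 d - 2))) \<alpha> = 0"
    unfolding map_poly_of_rat_of_int by (simp add: hom_distribs poly_monom)
  define Z where "Z = CC.simple_extension K \<alpha>"
  have "coprime (2 ^ n) d"
    using \<open>odd d\<close> by simp
  then have KZ: "CC.dimension d K Z"
    using dimension_simple_extension_coprime[OF K H(1) root] H(2) unfolding Z_def by simp
  have "(CC.algebraic over \<rat>) \<alpha>"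
    by (rule algebraic_if_rat_root[OF _ root]) (use H(1) in auto)
  then have Z: "subfield Z CC"
    unfolding Z_def using subfield_simple_extension_Rats[OF Rats_subset_subfield_CC[OF K(1)] K(1)] by blast
  have deg: "has_degree Z N"
    using CC.telescopic_base[OF subfield_CC_Rats K KZ] N unfolding has_degree_def by simp
  then have NF: "number_field Z"
    using Z unfolding number_field_def has_degree_def by blast
  have "K \<subseteq> Z"
    unfolding Z_def by (rule CC.simple_extension_incl) simp_all
  then have KFp: "K \<subseteq> Fp Z 2"
    unfolding Fp_def K_def cyc_inf_def by blast
  obtain e where e: "CC.dimension (2 ^ e) \<rat> (Fp Z 2)" "e \<le> n"
    using Fp_2_dimensions[OF NF deg] unfolding n_def[symmetric] by blast
  have "(2::nat) ^ n \<le> 2 ^ e"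
    by (rule CC.dimension_mono[OF subfield_CC_Rats K(2) e(1) KFp])
  with e(2) have "e = n"
    by simp
  with e(1) have "K = Fp Z 2"
    using CC.dimension_subset_eq[OF subfield_CC_Rats K(2) _ KFp] by simp
  with NF deg \<open>K \<subseteq> Z\<close> KZ show ?thesis
    using that unfolding K_def d_def by simp
qed

theorem mainTheorem17:
  fixes s d :: nat
  assumes "s \<ge> 1" and "d \<ge> 1"
  defines "n \<equiv> multiplicity (2::nat) (2 * d)"
  shows "(\<exists>Z. number_field Z \<and> has_degree Z (2 * d) \<and>
             cyc (2 ^ (n + 1)) \<subseteq> Z \<and>
             ring.dimension CC ((2 * d) div 2 ^ n) (cyc (2 ^ (n + 1))) Z \<and>
             Fp Z 2 = cyc (2 ^ (n + 1)) \<and>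
             (\<forall>Z'. number_field Z' \<and> has_degree Z' (2 * d) \<longrightarrow>
                multiplicity (2::nat) (schur_bound s Z') \<le> multiplicity (2::nat) (schur_bound s Z)))
       \<and> (\<forall>Z. number_field Z \<and> has_degree Z (2 * d) \<and>
             (\<forall>Z'. number_field Z' \<and> has_degree Z' (2 * d) \<longrightarrow>
                multiplicity (2::nat) (schur_bound s Z') \<le> multiplicity (2::nat) (schur_bound s Z))
             \<longrightarrow> Fp Z 2 = cyc (2 ^ (n + 1)))"
proof -
  let ?max = "(n + 1) * s + v2 (fact s)"
  have N: "2 * d > 0" "even (2 * d)"
    using assms(2) by simp_all
  have le_max: "v2 (schur_bound s Z) \<le> ?max" if "number_field Z" "has_degree Z (2 * d)" for Z
    using v2_schur_bound_le[OF that] unfolding n_def .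
  have eq_max_iff: "v2 (schur_bound s Z) = ?max \<longleftrightarrow> Fp Z 2 = cyc (2 ^ (n + 1))"
    if "number_field Z" "has_degree Z (2 * d)" for Z
    using v2_schur_bound_eq_iff[OF that N(2) assms(1)] unfolding n_def .
  obtain Z0 where Z0: "number_field Z0" "has_degree Z0 (2 * d)" "cyc (2 ^ (n + 1)) \<subseteq> Z0"
      "CC.dimension ((2 * d) div 2 ^ n) (cyc (2 ^ (n + 1))) Z0" "Fp Z0 2 = cyc (2 ^ (n + 1))"
    using exists_field_Fp_2_eq_cyc[OF N(1)] unfolding n_def[symmetric] .
  have max: "v2 (schur_bound s Z0) = ?max"
    using eq_max_iff[OF Z0(1,2)] Z0(5) by simp
  have Z0_maximal: "v2 (schur_bound s Z) \<le> v2 (schur_bound s Z0)"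
    if "number_field Z" "has_degree Z (2 * d)" for Z
    using le_max[OF that] max by simp
  have Fp_if_maximal: "Fp Z 2 = cyc (2 ^ (n + 1))"
    if "number_field Z" "has_degree Z (2 * d)" "v2 (schur_bound s Z0) \<le> v2 (schur_bound s Z)" for Z
    using le_max[OF that(1,2)] that(3) eq_max_iff[OF that(1,2)] max by simp
  show ?thesis
    using Z0 Z0_maximal Fp_if_maximal by blast
qed

end
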